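(* Let $a,a^\dagger$ be the annihilation and creation operators of the harmonic oscillator Fock space, with $[a,a^\dagger]=1$, vacuum $|0\rangle$ satisfying $a|0\rangle=0$, $\langle 0|a^\dagger=0$, $\langle0|0\rangle=1$. For a complex number $s$ with $\mathrm{Re}(s)>1$, $$\zeta(s)=\langle 0|\,\frac{a}{1-a}\,(a^\dagger a)^{-s}\,(e^{a^\dagger}-1)\,|0\rangle,$$ where $\zeta(s)=\sum_{n\ge1}n^{-s}$ is the Riemann zeta function, $\frac{a}{1-a}:=\sum_{\ell\ge1}a^\ell$ and $e^{a^\dagger}-1:=\sum_{m\ge1}\frac{1}{m!}(a^\dagger)^m$ are formal series, and the expression is evaluated termwise.
   Context: The number states $|n\rangle:=(a^\dagger)^n|0\rangle/\sqrt{n!}$, $\langle n|:=\langle0|a^n/\sqrt{n!}$ satisfy $\langle m|n\rangle=\delta_{mn}$, and $a^\dagger a|n\rangle=n|n\rangle$. The operator $(a^\dagger a)^{-s}$ is defined on states $|n\rangle$ with $n\ge1$ by $(a^\dagger a)^{-s}|n\rangle=n^{-s}|n\rangle$. *)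

theory Defs
  imports "HOL-Analysis.Analysis"
begin

text \<open>Fock space states are represented by their coefficient sequences in the
number basis: a vector v corresponds to the sum over n of (v n) |n>.\<close>

type_synonym fock = "nat \<Rightarrow> complex"

definition vac :: fock where
  "vac = (\<lambda>n. if n = 0 then 1 else 0)"

text \<open>Annihilation operator a: a|n> = sqrt n |n-1>.\<close>
definition ann :: "fock \<Rightarrow> fock" where
  "ann v = (\<lambda>n. complex_of_real (sqrt (real (Suc n))) * v (Suc n))"

text \<open>Creation operator a-dagger: a-dagger|n> = sqrt (n+1) |n+1>.\<close>
definition cre :: "fock \<Rightarrow> fock" where
  "cre v = (\<lambda>n. if n = 0 then 0 else complex_of_real (sqrt (real n)) * v (n - 1))"

definition vac_bra :: "fock \<Rightarrow> complex" where
  "vac_bra v = v 0"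

text \<open>(a-dagger a)^(-s): multiplies |n> by n^(-s) for n \<ge> 1 (where it is defined);
the |0> component (where the operator is undefined) is set to 0.\<close>
definition num_neg_pow :: "complex \<Rightarrow> fock \<Rightarrow> fock" where
  "num_neg_pow s v = (\<lambda>n. if n \<ge> 1 then (of_nat n) powr (-s) * v n else 0)"

definition zeta_series :: "complex \<Rightarrow> complex" where
  "zeta_series s = (\<Sum>n. (of_nat (Suc n)) powr (-s))"

text \<open>Term (l, m) of the termwise expansion of
  <0| (sum_{l\<ge>1} a^l) (a-dagger a)^(-s) (sum_{m\<ge>1} (a-dagger)^m / m!) |0>.\<close>
definition zeta_term :: "complex \<Rightarrow> nat \<Rightarrow> nat \<Rightarrow> complex" where
  "zeta_term s l m = vac_bra ((ann ^^ l) (num_neg_pow s (\<lambda>n. (1 / of_nat (fact m)) * (cre ^^ m) vac n)))"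

end

theory Submission
  imports Defs
begin

text \<open>The state \<open>(e^{a\<dagger>} - 1)|0>\<close> has component \<open>1/\<surd>m!\<close> along \<open>|m>\<close>, and
  \<open><0|a^l\<close> picks out \<open>\<surd>l!\<close> times the component along \<open>|l>\<close>. Hence the \<open>(l, m)\<close> term of
  the double series vanishes off the diagonal and equals \<open>m^{-s}\<close> on it, so the double
  sum collapses to the Dirichlet series of \<open>\<zeta>(s)\<close>, which converges absolutely for
  \<open>Re s > 1\<close>.\<close>

lemma cre_funpow_vac:
  "(cre ^^ m) vac n = (if n = m then complex_of_real (sqrt (fact m)) else 0)"
proof (induction m arbitrary: n)
  case 0
  then show ?case by (simp add: vac_def)
next
  case (Suc m)
  have "(cre ^^ Suc m) vac n
      = (if n = 0 then 0 else complex_of_real (sqrt (real n)) * (cre ^^ m) vac (n - 1))"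
    by (simp add: cre_def)
  then show ?case
    by (auto simp: Suc real_sqrt_mult mult.commute)
qed

lemma ann_funpow_apply_0: "(ann ^^ l) v 0 = complex_of_real (sqrt (fact l)) * v l"
proof (induction l arbitrary: v)
  case 0
  then show ?case by simp
next
  case (Suc l)
  have "(ann ^^ Suc l) v 0 = (ann ^^ l) (ann v) 0"
    by (simp add: funpow_Suc_right del: funpow.simps)
  also have "\<dots> = complex_of_real (sqrt (fact l)) * ann v l"
    by (rule Suc)
  also have "ann v l = complex_of_real (sqrt (real (Suc l))) * v (Suc l)"
    by (simp add: ann_def)
  finally show ?case
    by (simp add: real_sqrt_mult mult.commute mult.left_commute del: of_nat_Suc)
qed

lemma zeta_term_eq:
  assumes "m \<ge> 1"
  shows "zeta_term s l m = (if l = m then of_nat m powr (-s) else 0)"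
proof (cases "l = m")
  case True
  have "complex_of_real (sqrt (fact m)) * complex_of_real (sqrt (fact m)) = fact m"
    by (simp flip: of_real_mult)
  moreover have "zeta_term s l m = complex_of_real (sqrt (fact m)) * complex_of_real (sqrt (fact m))
      * (of_nat m powr (-s)) / fact m"
    using True assms
    by (simp add: zeta_term_def vac_bra_def ann_funpow_apply_0 num_neg_pow_def cre_funpow_vac)
  ultimately show ?thesis
    using True by simp
qed (simp add: zeta_term_def vac_bra_def ann_funpow_apply_0 num_neg_pow_def cre_funpow_vac)

lemma has_sum_diagonal:
  assumes "(g has_sum S) A"
    and "\<And>x y. x \<in> A \<Longrightarrow> y \<in> A \<Longrightarrow> f (x, y) = (if x = y then g x else 0)"
  shows "(f has_sum S) (A \<times> A)"
proof -
  have "((f \<circ> (\<lambda>x. (x, x))) has_sum S) A"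
    using assms(1) by (rule has_sum_cong[THEN iffD1, rotated]) (simp add: assms(2))
  then have "(f has_sum S) ((\<lambda>x. (x, x)) ` A)"
    by (subst has_sum_reindex) (auto simp: inj_on_def)
  then show ?thesis
    by (rule has_sum_cong_neutral[THEN iffD1, rotated 3]) (auto simp: assms(2))
qed

lemma zeta_series_has_sum:
  assumes "Re s > 1"
  shows "((\<lambda>n. of_nat n powr (-s)) has_sum zeta_series s) {1..}"
proof -
  let ?f = "\<lambda>n::nat. (of_nat (Suc n) :: complex) powr (-s)"
  have "summable (\<lambda>n. real n powr (- Re s))"
    using assms by (subst summable_real_powr_iff) auto
  then have norm_summable: "summable (\<lambda>n. norm (?f n))"
    using summable_Suc_iff[where f = "\<lambda>n. real n powr (- Re s)"]
    by (simp add: norm_powr_real_powr del: of_nat_Suc)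
  then have "?f sums zeta_series s"
    unfolding zeta_series_def by (rule summable_sums[OF summable_norm_cancel])
  with norm_summable have "(?f has_sum zeta_series s) UNIV"
    by (rule norm_summable_imp_has_sum)
  moreover have "bij_betw Suc UNIV {1::nat..}"
    by (auto simp: image_iff Suc_le_eq gr0_conv_Suc)
  ultimately show ?thesis
    using has_sum_reindex_bij_betw[of Suc UNIV "{1..}" "\<lambda>n. of_nat n powr (-s)"] by simp
qed

theorem mainTheorem2:
  fixes s :: complex
  assumes "Re s > 1"
  shows "((\<lambda>(l, m). zeta_term s l m) has_sum zeta_series s) ({1..} \<times> {1..})"
  using zeta_series_has_sum[OF assms] by (rule has_sum_diagonal) (simp add: zeta_term_eq)

end
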